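(* Let $p$ be an odd prime, $n\ge 1$, and let $f,g:\mathbb{F}_{p^n}\to\mathbb{F}_{p^n}$ both be planar Dembowski–Ostrom functions. Then $f$ and $g$ are EA-equivalent if and only if $f$ and $g$ are linear equivalent.
   Context: A function $f:\mathbb{F}_{p^n}\to\mathbb{F}_{p^n}$ is planar if for every $a\in\mathbb{F}_{p^n}^*$ the map $x\mapsto f(x+a)-f(x)$ is a bijection of $\mathbb{F}_{p^n}$. A Dembowski–Ostrom (DO) function is one given by a polynomial of the form $\sum_{i,j}a_{ij}x^{p^i+p^j}$ with $a_{ij}\in\mathbb{F}_{p^n}$. A function is affine if it is the sum of a constant and a linearized polynomial $\sum_i c_i x^{p^i}$ over $\mathbb{F}_{p^n}$. Two functions $f,g$ are EA-equivalent if $g=l_1\circ f\circ l_2+l_3$ with $l_1,l_2,l_3$ affine and $l_1,l_2$ permutations of $\mathbb{F}_{p^n}$; they are linear equivalent if $g=l_1\circ f\circ l_2$ with $l_1,l_2$ linearized permutation polynomials (i.e. $\mathbb{F}_p$-linear bijections). *)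

theory Defs
  imports Main "HOL-Computational_Algebra.Primes"
begin

definition planar :: "('a::field \<Rightarrow> 'a) \<Rightarrow> bool" where
  "planar f \<longleftrightarrow> (\<forall>a. a \<noteq> 0 \<longrightarrow> bij (\<lambda>x. f (x + a) - f x))"

definition DO_fun :: "nat \<Rightarrow> ('a::field \<Rightarrow> 'a) \<Rightarrow> bool" where
  "DO_fun p f \<longleftrightarrow> (\<exists>(N::nat) (a::nat \<Rightarrow> nat \<Rightarrow> 'a).
      f = (\<lambda>x. \<Sum>i<N. \<Sum>j<N. a i j * x ^ (p ^ i + p ^ j)))"

definition linearized :: "nat \<Rightarrow> ('a::field \<Rightarrow> 'a) \<Rightarrow> bool" where
  "linearized p l \<longleftrightarrow> (\<exists>(N::nat) (c::nat \<Rightarrow> 'a). l = (\<lambda>x. \<Sum>i<N. c i * x ^ (p ^ i)))"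

definition affine_fun :: "nat \<Rightarrow> ('a::field \<Rightarrow> 'a) \<Rightarrow> bool" where
  "affine_fun p l \<longleftrightarrow> (\<exists>c L. linearized p L \<and> l = (\<lambda>x. c + L x))"

definition EA_equivalent :: "nat \<Rightarrow> ('a::field \<Rightarrow> 'a) \<Rightarrow> ('a \<Rightarrow> 'a) \<Rightarrow> bool" where
  "EA_equivalent p f g \<longleftrightarrow> (\<exists>l1 l2 l3. affine_fun p l1 \<and> affine_fun p l2 \<and> affine_fun p l3
      \<and> bij l1 \<and> bij l2 \<and> g = (\<lambda>x. l1 (f (l2 x)) + l3 x))"

definition linear_equivalent :: "nat \<Rightarrow> ('a::field \<Rightarrow> 'a) \<Rightarrow> ('a \<Rightarrow> 'a) \<Rightarrow> bool" where
  "linear_equivalent p f g \<longleftrightarrow> (\<exists>l1 l2. linearized p l1 \<and> linearized p l2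
      \<and> bij l1 \<and> bij l2 \<and> g = l1 \<circ> f \<circ> l2)"

end

theory Submission
  imports Defs "HOL-Number_Theory.Residues"
begin

text \<open>
  A DO function is a sum of products of two Frobenius powers, each of which is additive;
  hence it satisfies the parallelogram law \<open>f (c + y) + f (c - y) = 2 f c + 2 f y\<close>, and
  (as \<open>2 \<noteq> 0\<close>) it vanishes at \<open>0\<close> and is even. If \<open>g x = c\<^sub>1 + L\<^sub>1 (f (c\<^sub>2 + L\<^sub>2 x)) + c\<^sub>3 + L\<^sub>3 x\<close>,
  comparing \<open>g x + g (-x) = 2 g x\<close> with the parallelogram law for \<open>f\<close> at \<open>c\<^sub>2\<close> and
  \<open>L\<^sub>2 x\<close> makes the odd part \<open>L\<^sub>3\<close> and the constants cancel, leaving \<open>g = L\<^sub>1 \<circ> f \<circ> L\<^sub>2\<close>.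
\<close>

definition parallelogram_law :: "('a::ring_1 \<Rightarrow> 'a) \<Rightarrow> bool" where
  "parallelogram_law f \<longleftrightarrow> (\<forall>c y. f (c + y) + f (c - y) = 2 * f c + 2 * f y)"

lemma CHAR_eq_of_card_eq_prime_power:
  assumes "prime p" "card (UNIV :: 'a::{field,finite} set) = p ^ n"
  shows "CHAR('a) = p"
proof -
  have "prime CHAR('a)"
    by (rule prime_CHAR_semidom) (simp add: finite_imp_CHAR_pos)
  moreover have "CHAR('a) dvd p ^ n"
    using CHAR_dvd_CARD[where 'a='a] assms(2) by simp
  ultimately show ?thesis
    using assms(1) prime_dvd_power primes_dvd_imp_eq by blast
qed

lemma two_neq_zero_of_odd_CHAR:
  assumes "odd CHAR('a::field)"
  shows "(2::'a) \<noteq> 0"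
proof
  assume "(2::'a) = 0"
  then have "CHAR('a) dvd 2"
    using of_nat_eq_0_iff_char_dvd[of 2, where 'a='a] by simp
  then have "CHAR('a) \<le> 2" by (rule dvd_imp_le) simp
  with assms have "CHAR('a) = 1"
    by (auto simp: le_Suc_eq numeral_2_eq_2)
  then show False
    using of_nat_eq_0_iff_char_dvd[of 1, where 'a='a] by simp
qed

lemma additive_power_CHAR_power:
  assumes "prime CHAR('a::comm_ring_1)"
  shows "additive (\<lambda>x::'a. x ^ (CHAR('a) ^ i))"
  by standard (rule freshmans_dream'[OF assms refl])

lemma additive_linearized:
  fixes L :: "'a::field \<Rightarrow> 'a"
  assumes "prime CHAR('a)" "linearized CHAR('a) L"
  shows "additive L"
proof
  fix x y :: 'a
  interpret frobenius: additive "\<lambda>x::'a. x ^ (CHAR('a) ^ i)" for i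
    by (rule additive_power_CHAR_power[OF assms(1)])
  from assms(2) obtain N c where "L = (\<lambda>x. \<Sum>i<N. c i * x ^ (CHAR('a) ^ i))"
    unfolding linearized_def by blast
  then show "L (x + y) = L x + L y"
    by (simp add: frobenius.add distrib_left sum.distrib)
qed

lemma linearized_imp_affine_fun: "linearized p L \<Longrightarrow> affine_fun p L"
  unfolding affine_fun_def by (intro exI[of _ 0] exI[of _ L]) simp

lemma linearized_zero: "linearized p (\<lambda>x. 0)"
  unfolding linearized_def by (intro exI[of _ 0]) simp

lemma bij_linear_part_of_affine:
  fixes c :: "'a::ab_group_add" and L :: "'b \<Rightarrow> 'a"
  assumes "bij (\<lambda>x. c + L x)"
  shows "bij L"
proof -
  have "L = (\<lambda>z. z - c) \<circ> (\<lambda>x. c + L x)" by auto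
  moreover have "bij (\<lambda>z::'a. z - c)"
    by (rule bij_betwI[where g = "\<lambda>z. z + c"]) auto
  ultimately show ?thesis
    using assms bij_comp by metis
qed

lemma parallelogram_law_product_of_additive:
  fixes A B :: "'a::comm_ring_1 \<Rightarrow> 'a"
  assumes "additive A" "additive B"
  shows "parallelogram_law (\<lambda>x. A x * B x)"
proof -
  interpret A: additive A by fact
  interpret B: additive B by fact
  have "(a + b) * (c + d) + (a - b) * (c - d) = 2 * (a * c) + 2 * (b * d)" for a b c d :: 'a
    by (simp add: algebra_simps mult_2)
  then show ?thesis
    unfolding parallelogram_law_def by (simp add: A.add A.diff B.add B.diff)
qed

lemma parallelogram_law_sum:
  "(\<And>i. i \<in> I \<Longrightarrow> parallelogram_law (f i)) \<Longrightarrow> parallelogram_law (\<lambda>x. \<Sum>i\<in>I. f i x)"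
  unfolding parallelogram_law_def sum_distrib_left sum.distrib[symmetric] by simp

lemma parallelogram_law_scale:
  "parallelogram_law f \<Longrightarrow> parallelogram_law (\<lambda>x. a * f x)"
  unfolding parallelogram_law_def
proof (intro allI)
  fix c y
  assume "\<forall>c y. f (c + y) + f (c - y) = 2 * f c + 2 * f y"
  then have "a * (f (c + y) + f (c - y)) = a * (2 * f c + 2 * f y)" by simp
  then show "a * f (c + y) + a * f (c - y) = 2 * (a * f c) + 2 * (a * f y)"
    by (simp only: distrib_left mult_2)
qed

lemma parallelogram_law_DO_fun:
  fixes f :: "'a::field \<Rightarrow> 'a"
  assumes "prime CHAR('a)" "DO_fun CHAR('a) f"
  shows "parallelogram_law f"
proof -
  from assms(2) obtain N a
    where f: "f = (\<lambda>x. \<Sum>i<N. \<Sum>j<N. a i j * x ^ (CHAR('a) ^ i + CHAR('a) ^ j))"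
    unfolding DO_fun_def by blast
  have monomial: "parallelogram_law (\<lambda>x::'a. x ^ (CHAR('a) ^ i + CHAR('a) ^ j))" for i j
    using parallelogram_law_product_of_additive
      [OF additive_power_CHAR_power[OF assms(1), of i] additive_power_CHAR_power[OF assms(1), of j]]
    by (simp add: power_add)
  show ?thesis
    unfolding f by (intro parallelogram_law_sum parallelogram_law_scale) (rule monomial)
qed

lemma parallelogram_law_zero:
  fixes f :: "'a::idom \<Rightarrow> 'a"
  assumes "parallelogram_law f" "(2::'a) \<noteq> 0"
  shows "f 0 = 0"
proof -
  have "2 * f 0 = 2 * f 0 + 2 * f 0"
    using assms(1)[unfolded parallelogram_law_def, rule_format, of 0 0]
    by (simp only: add_0_right diff_0_right mult_2)
  then have "2 * f 0 = 0" by (simp only: add_cancel_right_right)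
  then show ?thesis using assms(2) by simp
qed

lemma parallelogram_law_even:
  fixes f :: "'a::idom \<Rightarrow> 'a"
  assumes "parallelogram_law f" "(2::'a) \<noteq> 0"
  shows "f (- x) = f x"
proof -
  have "f x + f (- x) = f x + f x"
    using assms(1)[unfolded parallelogram_law_def, rule_format, of 0 x]
      parallelogram_law_zero[OF assms]
    by (simp only: add_0_left diff_0 mult_zero_right mult_2)
  then show ?thesis by (rule add_left_imp_eq)
qed

lemma affine_parts_vanish:
  fixes f g :: "'a::idom \<Rightarrow> 'a"
  assumes two: "(2::'a) \<noteq> 0"
    and f: "parallelogram_law f" and g: "parallelogram_law g"
    and "additive L\<^sub>1" "additive L\<^sub>2" "additive L\<^sub>3"
    and g_eq: "\<And>x. g x = c\<^sub>1 + L\<^sub>1 (f (c\<^sub>2 + L\<^sub>2 x)) + (c\<^sub>3 + L\<^sub>3 x)"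
  shows "g x = L\<^sub>1 (f (L\<^sub>2 x))"
proof -
  interpret L\<^sub>1: additive L\<^sub>1 by fact
  interpret L\<^sub>2: additive L\<^sub>2 by fact
  interpret L\<^sub>3: additive L\<^sub>3 by fact
  have L\<^sub>1_double: "L\<^sub>1 (2 * a) = 2 * L\<^sub>1 a" for a
    by (simp only: mult_2 L\<^sub>1.add)
  define y where "y = L\<^sub>2 x"
  have g0: "c\<^sub>1 + L\<^sub>1 (f c\<^sub>2) + c\<^sub>3 = 0"
    using g_eq[of 0] parallelogram_law_zero[OF g two] by (simp add: L\<^sub>2.zero L\<^sub>3.zero)
  have "2 * g x = g x + g (- x)"
    by (simp only: parallelogram_law_even[OF g two] mult_2)
  also have "\<dots> = 2 * (c\<^sub>1 + c\<^sub>3) + L\<^sub>1 (f (c\<^sub>2 + y) + f (c\<^sub>2 - y))"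
    unfolding g_eq L\<^sub>1.add L\<^sub>2.minus L\<^sub>3.minus y_def by (simp add: algebra_simps)
  also have "\<dots> = 2 * (c\<^sub>1 + c\<^sub>3) + (2 * L\<^sub>1 (f c\<^sub>2) + 2 * L\<^sub>1 (f y))"
    using f[unfolded parallelogram_law_def, rule_format, of c\<^sub>2 y]
    by (simp only: L\<^sub>1.add L\<^sub>1_double)
  also have "\<dots> = 2 * (c\<^sub>1 + L\<^sub>1 (f c\<^sub>2) + c\<^sub>3) + 2 * L\<^sub>1 (f y)"
    by (simp add: algebra_simps)
  finally show ?thesis
    using two unfolding g0 y_def by simp
qed

lemma linear_equivalent_imp_EA_equivalent:
  assumes "linear_equivalent p f g"
  shows "EA_equivalent p f g"
proof -
  from assms obtain L\<^sub>1 L\<^sub>2 where L: "linearized p L\<^sub>1" "linearized p L\<^sub>2" "bij L\<^sub>1" "bij L\<^sub>2"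
    and "g = L\<^sub>1 \<circ> f \<circ> L\<^sub>2"
    unfolding linear_equivalent_def by blast
  then have "g = (\<lambda>x. L\<^sub>1 (f (L\<^sub>2 x)) + 0)" by auto
  then show ?thesis
    unfolding EA_equivalent_def
    using L linearized_imp_affine_fun linearized_zero by blast
qed

lemma EA_equivalent_imp_linear_equivalent:
  fixes f g :: "'a::field \<Rightarrow> 'a"
  assumes "prime CHAR('a)" "odd CHAR('a)" "DO_fun CHAR('a) f" "DO_fun CHAR('a) g"
    and "EA_equivalent CHAR('a) f g"
  shows "linear_equivalent CHAR('a) f g"
proof -
  from assms(5) obtain c\<^sub>1 c\<^sub>2 c\<^sub>3 L\<^sub>1 L\<^sub>2 L\<^sub>3
    where L: "linearized CHAR('a) L\<^sub>1" "linearized CHAR('a) L\<^sub>2" "linearized CHAR('a) L\<^sub>3"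
      and bij: "bij (\<lambda>x. c\<^sub>1 + L\<^sub>1 x)" "bij (\<lambda>x. c\<^sub>2 + L\<^sub>2 x)"
      and g_eq: "\<And>x. g x = c\<^sub>1 + L\<^sub>1 (f (c\<^sub>2 + L\<^sub>2 x)) + (c\<^sub>3 + L\<^sub>3 x)"
    unfolding EA_equivalent_def affine_fun_def by blast
  have "g x = L\<^sub>1 (f (L\<^sub>2 x))" for x
    using affine_parts_vanish[OF two_neq_zero_of_odd_CHAR[OF assms(2)]
        parallelogram_law_DO_fun[OF assms(1,3)] parallelogram_law_DO_fun[OF assms(1,4)]
        additive_linearized[OF assms(1) L(1)] additive_linearized[OF assms(1) L(2)]
        additive_linearized[OF assms(1) L(3)] g_eq] .
  then have "g = L\<^sub>1 \<circ> f \<circ> L\<^sub>2" by auto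
  then show ?thesis
    unfolding linear_equivalent_def
    using L bij bij_linear_part_of_affine by blast
qed

theorem lemma1:
  fixes f g :: "'a::{field,finite} \<Rightarrow> 'a" and p n :: nat
  assumes "prime p" and "odd p" and "n \<ge> 1" and "card (UNIV :: 'a set) = p ^ n"
    and "planar f" and "DO_fun p f" and "planar g" and "DO_fun p g"
  shows "EA_equivalent p f g \<longleftrightarrow> linear_equivalent p f g"
proof -
  have "CHAR('a) = p"
    using CHAR_eq_of_card_eq_prime_power assms(1,4) by blast
  then show ?thesis
    using EA_equivalent_imp_linear_equivalent linear_equivalent_imp_EA_equivalent assms(1,2,6,8)
    by blast
qed

end
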